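(* Let $a,b,h\in\mathbb{R}$ with $h>0$ and $\frac{b-a}{h}\in\mathbb{N}\setminus\{1\}$. Suppose $w:[a,b]_h\to\mathbb{R}$ satisfies $$-D_h^+D_h^-w(x)\le\lambda_{0,h}w(x)\ \ (x\in(a,b)_h),\qquad w(a)\le0,\ w(b)\le0,$$ for some $\lambda_{0,h}<\lambda_{1,h}:=\frac{4}{h^2}\sin^2\big(\frac{\pi h}{2(b-a)}\big)$. Then $w(x)\le0$ for all $x\in[a,b]_h$.
   Context: $[a,b]_h=[a,b]\cap(a+h\mathbb{Z})$ and $(a,b)_h=(a,b)\cap(a+h\mathbb{Z})$ (the grid points). $D_h^+w(x)=\frac{w(x+h)-w(x)}{h}$, $D_h^-w(x)=\frac{w(x)-w(x-h)}{h}$, so $D_h^+D_h^-w(x)=\frac{w(x+h)-2w(x)+w(x-h)}{h^2}$. *)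

theory Defs
  imports Complex_Main
begin

definition grid_closed :: "real \<Rightarrow> real \<Rightarrow> real \<Rightarrow> real set" where
  "grid_closed a b h = {x. a \<le> x \<and> x \<le> b \<and> (\<exists>k::int. x = a + of_int k * h)}"

definition grid_open :: "real \<Rightarrow> real \<Rightarrow> real \<Rightarrow> real set" where
  "grid_open a b h = {x. a < x \<and> x < b \<and> (\<exists>k::int. x = a + of_int k * h)}"

definition Dplus :: "real \<Rightarrow> (real \<Rightarrow> real) \<Rightarrow> real \<Rightarrow> real" where
  "Dplus h w x = (w (x + h) - w x) / h"

definition Dminus :: "real \<Rightarrow> (real \<Rightarrow> real) \<Rightarrow> real \<Rightarrow> real" where
  "Dminus h w x = (w x - w (x - h)) / h"

end

theory Submission
  imports Defs
begin

text \<open>Compare \<open>w\<close> with the positive discrete eigenfunction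
\<open>\<psi> m = cos (2 t (m - N/2))\<close> of \<open>-D\<^sub>h\<^sup>+D\<^sub>h\<^sup>-\<close>, whose eigenvalue \<open>4 sin\<^sup>2 t / h\<^sup>2\<close> exceeds
\<open>\<lambda>\<^sub>0\<^sub>,\<^sub>h\<close> once \<open>t\<close> is just below \<open>\<pi> h / (2 (b - a))\<close>. If \<open>w\<close> were positive somewhere,
at a maximum point of \<open>w / \<psi>\<close>, necessarily interior, the subsolution inequality for \<open>w\<close>
and the eigenvalue equation for \<open>\<psi>\<close> would force \<open>4 sin\<^sup>2 t \<le> \<lambda>\<^sub>0\<^sub>,\<^sub>h h\<^sup>2\<close>.\<close>

lemma discrete_max_principle_comparison:
  fixes u \<psi> :: "nat \<Rightarrow> real" and N :: nat and \<mu> \<kappa> :: real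
  assumes \<psi>_pos: "\<And>m. m \<le> N \<Longrightarrow> \<psi> m > 0"
    and \<psi>_super: "\<And>m. 0 < m \<Longrightarrow> m < N \<Longrightarrow> \<psi> (m + 1) + \<psi> (m - 1) \<le> (2 - \<kappa>) * \<psi> m"
    and u_sub: "\<And>m. 0 < m \<Longrightarrow> m < N \<Longrightarrow> 2 * u m - u (m + 1) - u (m - 1) \<le> \<mu> * u m"
    and "u 0 \<le> 0" and "u N \<le> 0" and "\<mu> < \<kappa>" and "m \<le> N"
  shows "u m \<le> 0"
proof (rule ccontr)
  assume "\<not> u m \<le> 0"
  define r where "r k = u k / \<psi> k" for k
  define M where "M = Max (r ` {0..N})"
  have r_le_M: "r k \<le> M" if "k \<le> N" for k
    unfolding M_def using that by (intro Max_ge) auto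
  have "M \<in> r ` {0..N}"
    unfolding M_def by (rule Max_in) auto
  then obtain k where "k \<le> N" and rk: "r k = M"
    by auto
  have "r m > 0"
    using \<open>\<not> u m \<le> 0\<close> \<psi>_pos[OF \<open>m \<le> N\<close>] by (simp add: r_def)
  with r_le_M[OF \<open>m \<le> N\<close>] have "M > 0" by linarith
  have u_le: "u j \<le> M * \<psi> j" if "j \<le> N" for j
    using r_le_M[OF that] \<psi>_pos[OF that] by (simp add: r_def divide_le_eq)
  have uk: "u k = M * \<psi> k"
    using rk \<psi>_pos[OF \<open>k \<le> N\<close>] by (simp add: r_def field_simps)
  with \<open>M > 0\<close> \<psi>_pos[OF \<open>k \<le> N\<close>] have "u k > 0" by simp
  with assms(4,5) have "k \<noteq> 0" "k \<noteq> N" by (metis not_le)+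
  with \<open>k \<le> N\<close> have "0 < k" "k < N" by simp_all
  have "u (k + 1) + u (k - 1) \<le> M * (\<psi> (k + 1) + \<psi> (k - 1))"
    using u_le[of "k + 1"] u_le[of "k - 1"] \<open>k < N\<close> by (simp add: distrib_left add_mono)
  also have "\<dots> \<le> (2 - \<kappa>) * u k"
    using mult_left_mono[OF \<psi>_super[OF \<open>0 < k\<close> \<open>k < N\<close>], of M] \<open>M > 0\<close> uk
    by (simp add: algebra_simps)
  finally have "\<kappa> * u k \<le> \<mu> * u k"
    using u_sub[OF \<open>0 < k\<close> \<open>k < N\<close>] by (simp add: algebra_simps)
  with \<open>u k > 0\<close> \<open>\<mu> < \<kappa>\<close> show False by simp
qed

lemma cos_add_cos_diff_eq_sin_sq:
  fixes A t :: real
  shows "cos (A + 2 * t) + cos (A - 2 * t) = (2 - 4 * (sin t)\<^sup>2) * cos A"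
proof -
  have "cos (A + 2 * t) + cos (A - 2 * t) = 2 * cos (2 * t) * cos A"
    by (simp add: cos_add cos_diff)
  then show ?thesis
    by (simp only: cos_double_sin) (simp add: algebra_simps)
qed

lemma centred_cos_pos:
  fixes t :: real and N m :: nat
  assumes "0 < t" "t * N < pi / 2" "m \<le> N"
  shows "cos (2 * t * (real m - real N / 2)) > 0"
proof -
  have "\<bar>real m - real N / 2\<bar> \<le> real N / 2"
    using \<open>m \<le> N\<close> by (simp add: abs_if)
  hence "\<bar>2 * t * (real m - real N / 2)\<bar> \<le> t * real N"
    using \<open>0 < t\<close> by (simp add: abs_mult mult_left_mono)
  with assms show ?thesis by (intro cos_gt_zero_pi) auto
qed

lemma sin_sq_gt_left_of:
  fixes c \<mu> :: real
  assumes "0 < c" "\<mu> < 4 * (sin c)\<^sup>2"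
  obtains t where "0 < t" "t < c" "\<mu> < 4 * (sin t)\<^sup>2"
proof -
  have "((\<lambda>t. 4 * (sin t)\<^sup>2) \<longlongrightarrow> 4 * (sin c)\<^sup>2) (at_left c)"
    by (intro tendsto_intros)
  hence "eventually (\<lambda>t. \<mu> < 4 * (sin t)\<^sup>2) (at_left c)"
    using assms(2) by (rule order_tendstoD)
  then obtain b0 where "b0 < c" and b0: "\<And>t. b0 < t \<Longrightarrow> t < c \<Longrightarrow> \<mu> < 4 * (sin t)\<^sup>2"
    by (auto simp: eventually_at_left_field)
  show thesis
    using that[of "(max b0 0 + c) / 2"] b0[of "(max b0 0 + c) / 2"] \<open>b0 < c\<close> \<open>0 < c\<close>
    by auto
qed

theorem discrete_max_principle:
  fixes u :: "nat \<Rightarrow> real" and N :: nat and \<mu> :: real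
  assumes u_sub: "\<And>m. 0 < m \<Longrightarrow> m < N \<Longrightarrow> 2 * u m - u (m + 1) - u (m - 1) \<le> \<mu> * u m"
    and "u 0 \<le> 0" and "u N \<le> 0"
    and "\<mu> < 4 * (sin (pi / (2 * N)))\<^sup>2" and "m \<le> N"
  shows "u m \<le> 0"
proof (cases "N = 0")
  case True
  with \<open>m \<le> N\<close> \<open>u 0 \<le> 0\<close> show ?thesis by simp
next
  case False
  then have "0 < pi / (2 * N)" by simp
  then obtain t where "0 < t" "t < pi / (2 * N)" and \<mu>_less: "\<mu> < 4 * (sin t)\<^sup>2"
    using sin_sq_gt_left_of assms(4) by blast
  with False have "t * N < pi / 2"
    by (simp add: less_divide_eq mult.commute)
  define \<psi> where "\<psi> k = cos (2 * t * (real k - real N / 2))" for k :: nat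
  show ?thesis
  proof (rule discrete_max_principle_comparison[OF _ _ u_sub assms(2,3) \<mu>_less \<open>m \<le> N\<close>])
    show "\<psi> k > 0" if "k \<le> N" for k
      unfolding \<psi>_def using \<open>0 < t\<close> \<open>t * N < pi / 2\<close> that by (rule centred_cos_pos)
    show "\<psi> (k + 1) + \<psi> (k - 1) \<le> (2 - 4 * (sin t)\<^sup>2) * \<psi> k" if "0 < k" for k
    proof -
      define A where "A = 2 * t * (real k - real N / 2)"
      have "\<psi> (k + 1) = cos (A + 2 * t)" "\<psi> (k - 1) = cos (A - 2 * t)"
        using that by (simp_all add: \<psi>_def A_def of_nat_diff algebra_simps)
      then show ?thesis
        using cos_add_cos_diff_eq_sin_sq[of A t] by (simp add: \<psi>_def A_def)
    qed
  qed
qed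

lemma neg_second_difference:
  assumes "h \<noteq> 0"
  shows "- Dplus h (Dminus h w) x = (2 * w x - w (x + h) - w (x - h)) / h\<^sup>2"
  using assms by (simp add: Dplus_def Dminus_def field_simps power2_eq_square)

lemma grid_closed_eq_nat_multiples:
  assumes "h > 0" "b = a + real N * h"
  shows "grid_closed a b h = {a + real m * h | m. m \<le> N}"
proof (intro set_eqI iffI)
  fix x assume "x \<in> grid_closed a b h"
  then obtain k :: int where "a \<le> x" "x \<le> b" and x: "x = a + of_int k * h"
    by (auto simp: grid_closed_def)
  with assms have "0 \<le> k" "of_int k \<le> real N"
    by (simp_all add: zero_le_mult_iff)
  with x have "x = a + real (nat k) * h \<and> nat k \<le> N"
    by (simp add: nat_le_iff)
  then show "x \<in> {a + real m * h | m. m \<le> N}" by blast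
next
  fix x assume "x \<in> {a + real m * h | m. m \<le> N}"
  then obtain m where x: "x = a + real m * h" and "m \<le> N" by blast
  with assms have "a \<le> x" "x \<le> b"
    by (simp_all add: mult_right_mono)
  moreover have "x = a + of_int (int m) * h" using x by simp
  ultimately show "x \<in> grid_closed a b h"
    unfolding grid_closed_def by blast
qed

theorem mainTheorem10:
  fixes a b h lam0 :: real and w :: "real \<Rightarrow> real" and N :: nat
  assumes "h > 0"
    and "(b - a) / h = real N" and "N \<noteq> 1"
    and "\<forall>x\<in>grid_open a b h. - Dplus h (Dminus h w) x \<le> lam0 * w x"
    and "w a \<le> 0" and "w b \<le> 0"
    and "lam0 < 4 / h^2 * (sin (pi * h / (2 * (b - a))))^2"
  shows "\<forall>x\<in>grid_closed a b h. w x \<le> 0"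
proof -
  have b: "b = a + real N * h" using assms(1,2) by (simp add: field_simps)
  define u where "u m = w (a + real m * h)" for m :: nat
  have "2 * u m - u (m + 1) - u (m - 1) \<le> lam0 * h\<^sup>2 * u m" if "0 < m" "m < N" for m
  proof -
    let ?x = "a + real m * h"
    have "?x \<in> grid_open a b h"
      unfolding grid_open_def using that assms(1) b
      by (auto intro!: exI[of _ "int m"])
    with assms(4) have "- Dplus h (Dminus h w) ?x \<le> lam0 * w ?x" by blast
    then have "(2 * w ?x - w (?x + h) - w (?x - h)) / h\<^sup>2 \<le> lam0 * w ?x"
      using neg_second_difference[of h w ?x] assms(1) by simp
    with assms(1) that show ?thesis
      by (simp add: u_def divide_le_eq of_nat_diff algebra_simps)
  qed
  moreover have "lam0 * h\<^sup>2 < 4 * (sin (pi / (2 * N)))\<^sup>2"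
    using assms(1,7) b by (simp add: field_simps)
  ultimately have "u m \<le> 0" if "m \<le> N" for m
    using discrete_max_principle[of N u "lam0 * h\<^sup>2"] assms(5,6) b that
    by (simp add: u_def)
  then show ?thesis
    using grid_closed_eq_nat_multiples[OF assms(1) b] by (auto simp: u_def)
qed

end
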